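(* Let $\varepsilon>0$ and $C_0>0$. There exist constants $c_1,c_2>0$ such that for all sufficiently large $n$ and every integer $k$ with $1\le k\le C_0\,n^{1/2-\varepsilon}$, there exist $m$ and a sequence $S\in[n]^m$ with $\mathsf{WS}(S)\le c_1\, m\log k$ and $\mathsf{F}^{k}(S)\ge c_2\, m\log(n/k)$.
   Context: $\log(x)=\log_2(\max\{2,x\})$. Working set bound: $\mathsf{WS}(X)=\sum_{t=1}^m\log\rho_t(x_t)$, where $\rho_t(a)$ is the number of distinct keys accessed strictly between the last time $s<t$ with $x_s=a$ and time $t$ (all keys considered accessed at time $0$). $k$-finger cost: for a static BST $T$ on $[n]$, $d_T(a,b)$ is the number of edges between $a$ and $b$ in $T$. A $k$-finger strategy is an initial vector $\vec\ell\in[n]^k$ and $\vec f\in[k]^m$, finger $f_t$ serving $x_t$, with cost $\sum_{t=1}^m(1+d_T(x_t,p_t))$ where $p_t$ is the position of finger $f_t$ before time $t$ (its last served key, or $\ell_{f_t}$). $\mathsf{F}^k_T(X)$ is the minimum such cost and $\mathsf{F}^k(X)=\min_T\mathsf{F}^k_T(X)$ over BSTs $T$ on $[n]$. *)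

theory Defs
  imports Complex_Main "HOL-Library.Tree"
begin

definition lg :: "real \<Rightarrow> real" where
  "lg x = log 2 (max 2 x)"

(* Access sequence X = x_1 ... x_m is a list xs with x_t = xs ! (t-1).
   last_acc xs t a = the last time s < t with x_s = a, or 0 (all keys accessed at time 0). *)
definition last_acc :: "nat list \<Rightarrow> nat \<Rightarrow> nat \<Rightarrow> nat" where
  "last_acc xs t a = Max ({0} \<union> {s. 1 \<le> s \<and> s < t \<and> xs ! (s - 1) = a})"

definition rho :: "nat list \<Rightarrow> nat \<Rightarrow> nat \<Rightarrow> nat" where
  "rho xs t a = card {xs ! (u - 1) | u. last_acc xs t a < u \<and> u < t}"

definition WS :: "nat list \<Rightarrow> real" where
  "WS xs = (\<Sum>t = 1..length xs. lg (real (rho xs t (xs ! (t - 1)))))"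

fun depth_key :: "nat tree \<Rightarrow> nat \<Rightarrow> nat" where
  "depth_key Leaf a = 0"
| "depth_key (Node l x r) a =
     (if a = x then 0 else if a < x then 1 + depth_key l a else 1 + depth_key r a)"

(* d_T(a,b): number of edges on the path between keys a and b of the BST T
   (the path goes through their lowest common ancestor) *)
fun tdist :: "nat tree \<Rightarrow> nat \<Rightarrow> nat \<Rightarrow> nat" where
  "tdist Leaf a b = 0"
| "tdist (Node l x r) a b =
     (if a < x \<and> b < x then tdist l a b
      else if x < a \<and> x < b then tdist r a b
      else depth_key (Node l x r) a + depth_key (Node l x r) b)"

definition bst_on :: "nat \<Rightarrow> nat tree \<Rightarrow> bool" where
  "bst_on n T \<longleftrightarrow> bst T \<and> set_tree T = {1..n}"

fun finger_cost :: "nat tree \<Rightarrow> (nat \<Rightarrow> nat) \<Rightarrow> nat list \<Rightarrow> nat list \<Rightarrow> nat" where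
  "finger_cost T pos (x # xs) (f # fs) =
     1 + tdist T x (pos f) + finger_cost T (pos(f := x)) xs fs"
| "finger_cost T pos _ _ = 0"

(* F^k_T(X): minimum over initial vectors l in [n]^k (fingers indexed 0..k-1)
   and finger sequences f in [k]^m *)
definition FkT :: "nat \<Rightarrow> nat \<Rightarrow> nat tree \<Rightarrow> nat list \<Rightarrow> nat" where
  "FkT n k T xs = Inf {finger_cost T l xs fs | l fs.
      (\<forall>i < k. l i \<in> {1..n}) \<and> length fs = length xs \<and> set fs \<subseteq> {..<k}}"

definition Fk :: "nat \<Rightarrow> nat \<Rightarrow> nat list \<Rightarrow> nat" where
  "Fk n k xs = Inf {FkT n k T xs | T. bst_on n T}"

end

(* The hard sequence consists of n^2 groups of 2k keys, each group requested r = ceil(log n)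
   times in a row. Outside the first round of its group, every request repeats the key requested
   2k steps earlier, so it costs only O(log k) in the working-set bound; first rounds cost log n
   but are a 1/r fraction of the sequence.

   Against k fingers, in each round at most k of the 2k requests can be served by a finger that
   has not yet served in this round, so a round costs at least k times the minimum tree distance
   min_tdist T g between keys of the group g. For any BST T on [n] and any key a, the sum over b
   of 4^(-d_T(a,b)) is at most 5/2, hence a uniformly random group g has
   E[4^(-min_tdist T g)] <= 10 k^2 / n. There are at most n^n such trees, so averaging yields one
   choice of groups G with 4^(-sum of min_tdist T g over G) <= n^n (10 k^2 / n)^(n^2) for all T
   at once. As k <= C0 n^(1/2 - eps), this forces the sum to be at least eps n^2 log n / 4 in
   every tree, and the finger cost of all rounds is at least k r times that, i.e.
   Omega(eps m log n). *)

theory Submission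
  imports Defs "HOL-Real_Asymp.Real_Asymp"
begin

section \<open>Distances in binary search trees\<close>

lemma tdist_self [simp]: "tdist T a a = 0"
  by (induction T) auto

lemma distinct_inorder_bst: "bst T \<Longrightarrow> distinct (inorder T)"
  using bst_iff_sorted_wrt_less strict_sorted_iff by blast

lemma sum_list_inorder_Node:
  fixes f :: "'a \<Rightarrow> 'b::monoid_add"
  shows "(\<Sum>a\<leftarrow>inorder \<langle>l, x, r\<rangle>. f a) = (\<Sum>a\<leftarrow>inorder l. f a) + f x + (\<Sum>a\<leftarrow>inorder r. f a)"
  by (simp add: add.assoc)

lemma sum_quarter_pow_depth_le:
  "bst T \<Longrightarrow> (\<Sum>a\<leftarrow>inorder T. (1/4::real) ^ depth_key T a) \<le> 2"
proof (induction T)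
  case (Node l x r)
  have "(\<Sum>a\<leftarrow>inorder \<langle>l, x, r\<rangle>. (1/4::real) ^ depth_key \<langle>l, x, r\<rangle> a)
      = 1/4 * (\<Sum>a\<leftarrow>inorder l. (1/4) ^ depth_key l a) + 1
        + 1/4 * (\<Sum>a\<leftarrow>inorder r. (1/4) ^ depth_key r a)"
    unfolding sum_list_inorder_Node using Node.prems
    by (fastforce simp flip: sum_list_const_mult
        intro!: arg_cong2[where f = "(+)"] arg_cong[where f = sum_list] map_cong)
  also have "\<dots> \<le> 2"
    using Node by simp
  finally show ?case .
qed simp

(* The subtracted slack makes the induction go through: if p lies in the left subtree with
   q = (1/4)^(depth of p there), the slack q/2 of the subtree shrinks to q/8 at the node,
   which releases q/4 for the node itself and q/8 for the whole right subtree. *)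
lemma sum_quarter_pow_tdist_le:
  "bst T \<Longrightarrow> p \<in> set_tree T \<Longrightarrow>
   (\<Sum>a\<leftarrow>inorder T. (1/4::real) ^ tdist T a p) \<le> 5/2 - (1/4) ^ depth_key T p / 2"
proof (induction T)
  case (Node l x r)
  let ?T = "\<langle>l, x, r\<rangle>" and ?w = "\<lambda>t. (\<Sum>a\<leftarrow>inorder t. (1/4::real) ^ depth_key t a)"
  have scaled_depth_sum: "(\<Sum>a\<leftarrow>inorder t. c * (1/4::real) ^ depth_key t a) \<le> 2 * c"
    if "bst t" "0 \<le> c" for t c
    using mult_left_mono[OF sum_quarter_pow_depth_le[OF \<open>bst t\<close>] \<open>0 \<le> c\<close>]
    by (simp add: sum_list_const_mult mult.commute)
  consider "p = x" | "p < x" "p \<in> set_tree l" | "x < p" "p \<in> set_tree r"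
    using Node.prems by auto
  then show ?case
  proof cases
    case 1
    have "(\<Sum>a\<leftarrow>inorder ?T. (1/4::real) ^ tdist ?T a p) = 1/4 * ?w l + 1 + 1/4 * ?w r"
      unfolding sum_list_inorder_Node
      using Node.prems 1 by (fastforce simp flip: sum_list_const_mult
          intro!: arg_cong2[where f = "(+)"] arg_cong[where f = sum_list] map_cong)
    then show ?thesis
      using sum_quarter_pow_depth_le[of l] sum_quarter_pow_depth_le[of r] Node.prems 1 by simp
  next
    case 2
    let ?q = "(1/4::real) ^ depth_key l p"
    have "(\<Sum>a\<leftarrow>inorder ?T. (1/4::real) ^ tdist ?T a p)
        = (\<Sum>a\<leftarrow>inorder l. (1/4) ^ tdist l a p) + ?q/4
          + (\<Sum>a\<leftarrow>inorder r. ?q/16 * (1/4) ^ depth_key r a)"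
      unfolding sum_list_inorder_Node
      using Node.prems 2
      by (fastforce simp: power_add
          intro!: arg_cong2[where f = "(+)"] arg_cong[where f = sum_list] map_cong)
    also have "\<dots> \<le> 5/2 - ?q/2 + ?q/4 + ?q/8"
      using Node.IH(1) scaled_depth_sum[of r "?q/16"] Node.prems 2 by (intro add_mono) auto
    also have "\<dots> = 5/2 - (1/4) ^ depth_key ?T p / 2"
      using 2 by simp
    finally show ?thesis .
  next
    case 3
    let ?q = "(1/4::real) ^ depth_key r p"
    have "(\<Sum>a\<leftarrow>inorder ?T. (1/4::real) ^ tdist ?T a p)
        = (\<Sum>a\<leftarrow>inorder l. ?q/16 * (1/4) ^ depth_key l a) + ?q/4
          + (\<Sum>a\<leftarrow>inorder r. (1/4) ^ tdist r a p)"
      unfolding sum_list_inorder_Node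
      using Node.prems 3
      by (fastforce simp: power_add
          intro!: arg_cong2[where f = "(+)"] arg_cong[where f = sum_list] map_cong)
    also have "\<dots> \<le> ?q/8 + ?q/4 + (5/2 - ?q/2)"
      using Node.IH(2) scaled_depth_sum[of l "?q/16"] Node.prems 3 by (intro add_mono) auto
    also have "\<dots> = 5/2 - (1/4) ^ depth_key ?T p / 2"
      using 3 by simp
    finally show ?thesis .
  qed
qed simp

lemma sum_sum_quarter_pow_tdist_le:
  assumes "bst_on n T"
  shows "(\<Sum>a\<in>{1..n}. \<Sum>b\<in>{1..n}. (1/4::real) ^ tdist T a b) \<le> 5/2 * n"
proof -
  have T: "bst T" "set_tree T = {1..n}"
    using assms by (auto simp: bst_on_def)
  have "(\<Sum>a\<in>{1..n}. (1/4::real) ^ tdist T a b) \<le> 5/2" if "b \<in> {1..n}" for b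
  proof -
    have "(\<Sum>a\<in>{1..n}. (1/4::real) ^ tdist T a b) = (\<Sum>a\<leftarrow>inorder T. (1/4) ^ tdist T a b)"
      using T by (simp add: sum_list_distinct_conv_sum_set distinct_inorder_bst)
    also have "\<dots> \<le> 5/2 - (1/4) ^ depth_key T b / 2"
      using sum_quarter_pow_tdist_le[OF T(1), of b] that T by simp
    also have "\<dots> \<le> 5/2"
      by simp
    finally show ?thesis .
  qed
  then have "(\<Sum>b\<in>{1..n}. \<Sum>a\<in>{1..n}. (1/4::real) ^ tdist T a b) \<le> (\<Sum>b\<in>{1..n}. 5/2)"
    by (intro sum_mono)
  then show ?thesis
    by (subst sum.swap) (simp add: mult.commute)
qed

lemma preorder_inj_bst:
  "bst t1 \<Longrightarrow> bst t2 \<Longrightarrow> preorder t1 = preorder (t2::nat tree) \<Longrightarrow> t1 = t2"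
proof (induction t1 arbitrary: t2)
  case (Node l a r)
  obtain l' r' where t2: "t2 = \<langle>l', a, r'\<rangle>"
    and lr: "preorder l @ preorder r = preorder l' @ preorder r'"
    using Node.prems(3) by (cases t2) auto
  have "filter (\<lambda>x. x < a) (preorder l @ preorder r) = preorder l"
    "filter (\<lambda>x. x < a) (preorder l' @ preorder r') = preorder l'"
    using Node.prems(1,2) t2 by (auto simp: filter_id_conv filter_empty_conv)
  then have "preorder l = preorder l'" "preorder r = preorder r'"
    using lr by auto
  then show ?case
    using Node.IH(1)[of l'] Node.IH(2)[of r'] Node.prems(1,2) t2 by simp
qed (auto elim: preorder.elims)

definition lists_of :: "'a set \<Rightarrow> nat \<Rightarrow> 'a list set" where
  "lists_of A n = {xs. set xs \<subseteq> A \<and> length xs = n}"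

lemma finite_lists_of: "finite A \<Longrightarrow> finite (lists_of A n)"
  unfolding lists_of_def by (rule finite_lists_length_eq)

lemma card_lists_of: "finite A \<Longrightarrow> card (lists_of A n) = card A ^ n"
  unfolding lists_of_def by (rule card_lists_length_eq)

lemma finite_bst_on: "finite {T. bst_on n T}"
  and card_bst_on_le: "card {T. bst_on n T} \<le> n ^ n"
proof -
  have inj: "inj_on preorder {T. bst_on n T}"
    by (rule inj_onI) (auto simp: bst_on_def intro: preorder_inj_bst)
  have "preorder T \<in> lists_of {1..n} n" if "bst_on n T" for T
    using that distinct_card[OF distinct_inorder_bst, of T]
    by (auto simp: bst_on_def lists_of_def)
  then have sub: "preorder ` {T. bst_on n T} \<subseteq> lists_of {1..n} n"
    by auto
  show "finite {T. bst_on n T}"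
    using finite_imageD[OF finite_subset[OF sub finite_lists_of] inj] by simp
  show "card {T. bst_on n T} \<le> n ^ n"
    using card_inj_on_le[OF inj sub finite_lists_of] card_lists_of[of "{1..n}" n] by simp
qed

fun left_spine :: "nat \<Rightarrow> nat tree" where
  "left_spine 0 = Leaf"
| "left_spine (Suc n) = \<langle>left_spine n, Suc n, Leaf\<rangle>"

lemma bst_on_left_spine: "bst_on n (left_spine n)"
  unfolding bst_on_def by (induction n) auto

section \<open>Groups of keys spread out in every tree\<close>

lemma lists_of_0 [simp]: "lists_of A 0 = {[]}"
  by (auto simp: lists_of_def)

lemma sum_lists_of_Suc:
  assumes "finite A"
  shows "(\<Sum>xs\<in>lists_of A (Suc n). F xs) = (\<Sum>x\<in>A. \<Sum>xs\<in>lists_of A n. F (x # xs))"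
proof -
  have "(\<Sum>xs\<in>lists_of A (Suc n). F xs) = (\<Sum>(xs, x)\<in>lists_of A n \<times> A. F (x # xs))"
    unfolding lists_of_def lists_length_Suc_eq
    by (subst sum.reindex[OF inj_split_Cons]) (simp add: case_prod_unfold)
  also have "\<dots> = (\<Sum>x\<in>A. \<Sum>xs\<in>lists_of A n. F (x # xs))"
    by (simp add: sum.cartesian_product[symmetric] sum.swap[of _ A])
  finally show ?thesis .
qed

lemma sum_lists_of_prod_list:
  fixes h :: "'a \<Rightarrow> real"
  assumes "finite A"
  shows "(\<Sum>xs\<in>lists_of A n. \<Prod>x\<leftarrow>xs. h x) = sum h A ^ n"
  by (induction n) (simp_all add: sum_lists_of_Suc[OF assms]
      sum_distrib_left[symmetric] sum_distrib_right[symmetric])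

lemma sum_lists_of_sum_list:
  fixes h :: "'a \<Rightarrow> real"
  assumes "finite A"
  shows "real (card A) * (\<Sum>xs\<in>lists_of A n. \<Sum>x\<leftarrow>xs. h x) = real n * real (card A) ^ n * sum h A"
proof (induction n)
  case (Suc n)
  have "(\<Sum>xs\<in>lists_of A (Suc n). \<Sum>x\<leftarrow>xs. h x)
      = card A ^ n * sum h A + card A * (\<Sum>xs\<in>lists_of A n. \<Sum>x\<leftarrow>xs. h x)"
    by (simp add: sum_lists_of_Suc[OF assms] sum.distrib card_lists_of[OF assms]
        sum_distrib_right mult.commute)
  then show ?case
    using Suc by (simp add: algebra_simps)
qed simp

fun pairsum :: "('a \<Rightarrow> 'a \<Rightarrow> real) \<Rightarrow> 'a list \<Rightarrow> real" where
  "pairsum w [] = 0"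
| "pairsum w (x # xs) = (\<Sum>y\<leftarrow>xs. w x y + w y x) + pairsum w xs"

lemma pairsum_nonneg: "(\<And>a b. 0 \<le> w a b) \<Longrightarrow> 0 \<le> pairsum w xs"
  by (induction xs) (auto intro!: sum_list_nonneg add_nonneg_nonneg)

lemma nth_le_pairsum:
  assumes "\<And>a b. 0 \<le> w a b"
  shows "i < length xs \<Longrightarrow> j < length xs \<Longrightarrow> i \<noteq> j \<Longrightarrow> w (xs ! i) (xs ! j) \<le> pairsum w xs"
proof (induction xs arbitrary: i j)
  case (Cons x xs)
  let ?p = "\<Sum>y\<leftarrow>xs. w x y + w y x"
  have x_xs: "w x y + w y x \<le> ?p" if "y \<in> set xs" for y
    using that assms by (intro member_le_sum_list) (auto intro: add_nonneg_nonneg)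
  have "0 \<le> pairsum w xs" "0 \<le> ?p"
    using assms by (auto intro!: pairsum_nonneg sum_list_nonneg add_nonneg_nonneg)
  moreover consider "i = 0" "0 < j" | "0 < i" "j = 0" | "0 < i" "0 < j"
    using Cons.prems(3) by blast
  then have "w ((x # xs) ! i) ((x # xs) ! j) \<le> ?p \<or> w ((x # xs) ! i) ((x # xs) ! j) \<le> pairsum w xs"
  proof cases
    case 1
    then show ?thesis
      using x_xs[of "xs ! (j - 1)"] assms[of "xs ! (j - 1)" x] Cons.prems by simp
  next
    case 2
    then show ?thesis
      using x_xs[of "xs ! (i - 1)"] assms[of x "xs ! (i - 1)"] Cons.prems by simp
  next
    case 3
    then show ?thesis
      using Cons.IH[of "i - 1" "j - 1"] Cons.prems by simp
  qed
  ultimately show ?case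
    by auto
qed simp

lemma sum_lists_of_pairsum:
  fixes w :: "'a \<Rightarrow> 'a \<Rightarrow> real"
  assumes "finite A"
  shows "real (card A) ^ 2 * (\<Sum>xs\<in>lists_of A n. pairsum w xs)
       = real n * (real n - 1) * real (card A) ^ n * (\<Sum>a\<in>A. \<Sum>b\<in>A. w a b)"
proof (induction n)
  case (Suc n)
  let ?c = "real (card A)" and ?W = "\<Sum>a\<in>A. \<Sum>b\<in>A. w a b"
  have sym: "(\<Sum>x\<in>A. \<Sum>y\<in>A. w x y + w y x) = 2 * ?W"
    by (simp add: sum.distrib sum.swap[of "\<lambda>x y. w y x"])
  have "?c * (\<Sum>x\<in>A. \<Sum>xs\<in>lists_of A n. \<Sum>y\<leftarrow>xs. w x y + w y x)
      = (\<Sum>x\<in>A. real n * ?c ^ n * (\<Sum>y\<in>A. w x y + w y x))"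
    by (subst sum_distrib_left) (simp only: sum_lists_of_sum_list[OF assms])
  also have "\<dots> = 2 * real n * ?c ^ n * ?W"
    by (simp add: sum_distrib_left[symmetric] sym)
  finally have pairs:
    "?c * (\<Sum>x\<in>A. \<Sum>xs\<in>lists_of A n. \<Sum>y\<leftarrow>xs. w x y + w y x) = 2 * real n * ?c ^ n * ?W" .
  have "(\<Sum>xs\<in>lists_of A (Suc n). pairsum w xs)
      = (\<Sum>x\<in>A. \<Sum>xs\<in>lists_of A n. \<Sum>y\<leftarrow>xs. w x y + w y x) + ?c * (\<Sum>xs\<in>lists_of A n. pairsum w xs)"
    by (simp add: sum_lists_of_Suc[OF assms] sum.distrib)
  moreover have "?c ^ 2 * (x + ?c * y) = ?c * (?c * x) + ?c * (?c ^ 2 * y)" for x y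
    by (simp add: algebra_simps power2_eq_square)
  ultimately have "?c ^ 2 * (\<Sum>xs\<in>lists_of A (Suc n). pairsum w xs)
      = ?c * (?c * (\<Sum>x\<in>A. \<Sum>xs\<in>lists_of A n. \<Sum>y\<leftarrow>xs. w x y + w y x))
        + ?c * (?c ^ 2 * (\<Sum>xs\<in>lists_of A n. pairsum w xs))"
    by presburger
  also have "\<dots> = ?c * (2 * real n * ?c ^ n * ?W) + ?c * (real n * (real n - 1) * ?c ^ n * ?W)"
    by (simp only: pairs Suc)
  also have "\<dots> = real (Suc n) * (real (Suc n) - 1) * ?c ^ Suc n * ?W"
    by (simp add: algebra_simps)
  finally show ?case .
qed simp

definition min_tdist :: "nat tree \<Rightarrow> nat list \<Rightarrow> nat" where
  "min_tdist T xs =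
     (if distinct xs then Min {tdist T a b | a b. a \<in> set xs \<and> b \<in> set xs \<and> a \<noteq> b} else 0)"

lemma finite_tdist_pairs: "finite {tdist T a b | a b. a \<in> set xs \<and> b \<in> set xs \<and> a \<noteq> b}"
  by (rule finite_subset[of _ "(\<lambda>(a, b). tdist T a b) ` (set xs \<times> set xs)"]) auto

lemma min_tdist_le:
  "distinct xs \<Longrightarrow> a \<in> set xs \<Longrightarrow> b \<in> set xs \<Longrightarrow> a \<noteq> b \<Longrightarrow> min_tdist T xs \<le> tdist T a b"
  unfolding min_tdist_def using finite_tdist_pairs by (auto intro!: Min_le)

lemma quarter_pow_min_tdist_le_pairsum:
  assumes "2 \<le> length xs"
  shows "(1/4::real) ^ min_tdist T xs \<le> pairsum (\<lambda>a b. (1/4) ^ tdist T a b) xs"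
proof -
  obtain i j where "i < length xs" "j < length xs" "i \<noteq> j"
    and "min_tdist T xs = tdist T (xs ! i) (xs ! j)"
  proof (cases "distinct xs")
    case True
    let ?D = "{tdist T a b | a b. a \<in> set xs \<and> b \<in> set xs \<and> a \<noteq> b}"
    have "0 < length xs" "1 < length xs"
      using assms by auto
    then have "xs ! 0 \<in> set xs" "xs ! 1 \<in> set xs" "xs ! 0 \<noteq> xs ! 1"
      using True by (auto simp: nth_eq_iff_index_eq simp del: One_nat_def)
    then have "tdist T (xs ! 0) (xs ! 1) \<in> ?D"
      by blast
    then have "Min ?D \<in> ?D"
      using Min_in[OF finite_tdist_pairs] by blast
    then show thesis
      using True that by (auto simp: min_tdist_def in_set_conv_nth)
  next
    case False
    then obtain i j where "i < length xs" "j < length xs" "i \<noteq> j" "xs ! i = xs ! j"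
      by (auto simp: distinct_conv_nth)
    then show thesis
      using False that by (metis min_tdist_def tdist_self)
  qed
  then show ?thesis
    using nth_le_pairsum[of "\<lambda>a b. (1/4::real) ^ tdist T a b" i xs j] by simp
qed

lemma sum_lists_of_quarter_pow_min_tdist_le:
  assumes "bst_on n T" "2 \<le> s"
  shows "real n * (\<Sum>xs\<in>lists_of {1..n} s. (1/4::real) ^ min_tdist T xs) \<le> 5/2 * real s ^ 2 * real n ^ s"
proof (cases "n = 0")
  case False
  let ?w = "\<lambda>a b. (1/4::real) ^ tdist T a b"
  have "real n ^ 2 * (\<Sum>xs\<in>lists_of {1..n} s. (1/4::real) ^ min_tdist T xs)
      \<le> real n ^ 2 * (\<Sum>xs\<in>lists_of {1..n} s. pairsum ?w xs)"
    using assms(2)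
    by (intro mult_left_mono sum_mono quarter_pow_min_tdist_le_pairsum) (auto simp: lists_of_def)
  also have "\<dots> = real s * (real s - 1) * real n ^ s * (\<Sum>a\<in>{1..n}. \<Sum>b\<in>{1..n}. ?w a b)"
    using sum_lists_of_pairsum[of "{1..n}" ?w s] by simp
  also have "\<dots> \<le> real s ^ 2 * real n ^ s * (5/2 * n)"
    using assms(2) sum_sum_quarter_pow_tdist_le[OF assms(1)]
    by (intro mult_mono) (auto simp: power2_eq_square intro!: sum_nonneg)
  finally have "real n * (real n * (\<Sum>xs\<in>lists_of {1..n} s. (1/4::real) ^ min_tdist T xs))
      \<le> real n * (5/2 * real s ^ 2 * real n ^ s)"
    by (simp add: power2_eq_square algebra_simps)
  then show ?thesis
    using False by simp
qed simp

lemma ex_le_of_sum_le: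
  fixes f :: "'a \<Rightarrow> real" and B :: real
  assumes "finite A" "A \<noteq> {}" "sum f A \<le> card A * B"
  shows "\<exists>a\<in>A. f a \<le> B"
proof (rule ccontr)
  assume "\<not> ?thesis"
  then have "(\<Sum>a\<in>A. B) < sum f A"
    using assms by (intro sum_strict_mono) auto
  then show False
    using assms(3) by simp
qed

lemma power_sum_list: "(c::'a::comm_monoid_mult) ^ (\<Sum>x\<leftarrow>xs. f x) = (\<Prod>x\<leftarrow>xs. c ^ f x)"
  by (induction xs) (simp_all add: power_add)

lemma sum_groups_quarter_pow_min_tdist_le:
  assumes "bst_on n T" "1 \<le> n" "2 \<le> s"
  shows "(\<Sum>G\<in>lists_of (lists_of {1..n} s) P. (1/4::real) ^ (\<Sum>g\<leftarrow>G. min_tdist T g))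
           \<le> card (lists_of (lists_of {1..n} s) P) * (5/2 * real s ^ 2 / n) ^ P"
proof -
  let ?LS = "lists_of {1..n} s" and ?B = "5/2 * real s ^ 2 / n :: real"
  have "(\<Sum>G\<in>lists_of ?LS P. (1/4::real) ^ (\<Sum>g\<leftarrow>G. min_tdist T g))
      = (\<Sum>G\<in>lists_of ?LS P. \<Prod>g\<leftarrow>G. (1/4) ^ min_tdist T g)"
    by (intro sum.cong refl, rule power_sum_list)
  also have "\<dots> = (\<Sum>g\<in>?LS. (1/4) ^ min_tdist T g) ^ P"
    by (simp add: sum_lists_of_prod_list finite_lists_of)
  also have "\<dots> \<le> (?B * n ^ s) ^ P"
    using sum_lists_of_quarter_pow_min_tdist_le[OF assms(1,3)] assms(2)
    by (intro power_mono) (auto simp: field_simps intro!: sum_nonneg)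
  also have "\<dots> = real ((n ^ s) ^ P) * ?B ^ P"
    by (simp only: power_mult_distrib of_nat_power mult.commute)
  also have "\<dots> = card (lists_of ?LS P) * ?B ^ P"
    by (simp add: card_lists_of finite_lists_of)
  finally show ?thesis .
qed

lemma ex_groups_spread_in_every_bst:
  assumes "1 \<le> n" "2 \<le> s"
  shows "\<exists>G\<in>lists_of (lists_of {1..n} s) P. \<forall>T. bst_on n T \<longrightarrow>
           (1/4::real) ^ (\<Sum>g\<leftarrow>G. min_tdist T g) \<le> n ^ n * (5/2 * real s ^ 2 / n) ^ P"
proof -
  let ?LG = "lists_of (lists_of {1..n} s) P" and ?TS = "{T. bst_on n T}"
  let ?B = "5/2 * real s ^ 2 / n :: real" and ?f = "\<lambda>T G. (1/4::real) ^ (\<Sum>g\<leftarrow>G. min_tdist T g)"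
  have "(\<Sum>G\<in>?LG. \<Sum>T\<in>?TS. ?f T G) \<le> (\<Sum>T\<in>?TS. card ?LG * ?B ^ P)"
    using assms by (subst sum.swap) (intro sum_mono sum_groups_quarter_pow_min_tdist_le; simp)
  also have "\<dots> \<le> card ?LG * (n ^ n * ?B ^ P)"
    using card_bst_on_le[of n] assms(1)
    by (simp add: mult.left_commute mult_right_mono flip: of_nat_power)
  finally have "(\<Sum>G\<in>?LG. \<Sum>T\<in>?TS. ?f T G) \<le> card ?LG * (n ^ n * ?B ^ P)" .
  moreover have "replicate P (replicate s 1) \<in> ?LG"
    using assms(1) by (auto simp: lists_of_def)
  ultimately obtain G where "G \<in> ?LG" and "(\<Sum>T\<in>?TS. ?f T G) \<le> n ^ n * ?B ^ P"
    using ex_le_of_sum_le[of ?LG "\<lambda>G. \<Sum>T\<in>?TS. ?f T G"] by (auto simp: finite_lists_of)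
  moreover have "?f T G \<le> (\<Sum>T\<in>?TS. ?f T G)" if "bst_on n T" for T
    using that finite_bst_on by (intro member_le_sum) auto
  ultimately show ?thesis
    by force
qed

section \<open>Lower bound for finger strategies\<close>

lemma finger_cost_append:
  "length fs = length xs \<Longrightarrow>
   \<exists>pos'. finger_cost T pos (xs @ ys) (fs @ gs)
     = finger_cost T pos xs fs + finger_cost T pos' ys gs"
proof (induction xs arbitrary: fs pos)
  case (Cons x xs)
  then obtain f fs' where "fs = f # fs'"
    by (cases fs) auto
  then show ?case
    using Cons.IH[of fs' "pos(f := x)"] Cons.prems by (auto simp: fun_upd_def)
qed auto

lemma length_le_finger_cost: "length fs = length xs \<Longrightarrow> length xs \<le> finger_cost T pos xs fs"
proof (induction xs arbitrary: fs pos)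
  case (Cons x xs)
  then obtain f fs' where "fs = f # fs'"
    by (cases fs) auto
  then show ?case
    using Cons.IH[of fs' "pos(f := x)"] Cons.prems by (simp add: fun_upd_def)
qed simp

(* Potential argument for one round of distinct requests ys from a set A of keys pairwise at
   distance at least delta. U holds fingers parked on keys of A that are no longer requested:
   serving a request with a finger of U costs at least delta, serving it with any other finger
   adds that finger to U, and this can happen at most k times. *)
lemma finger_cost_round_potential:
  assumes sep: "\<forall>a\<in>A. \<forall>b\<in>A. a \<noteq> b \<longrightarrow> \<delta> \<le> tdist T a b"
  shows "distinct ys \<Longrightarrow> set ys \<subseteq> A \<Longrightarrow> length fs = length ys \<Longrightarrow> set fs \<subseteq> {..<k} \<Longrightarrow>
    U \<subseteq> {..<k} \<Longrightarrow> (\<forall>f\<in>U. pos f \<in> A - set ys) \<Longrightarrow>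
    length ys + \<delta> * (length ys + card U) \<le> finger_cost T pos ys fs + \<delta> * k"
proof (induction ys arbitrary: fs pos U)
  case Nil
  then show ?case
    using card_mono[of "{..<k}" U] by simp
next
  case (Cons x ys)
  obtain f fs' where fs: "fs = f # fs'" "f < k"
    using Cons.prems(3,4) by (cases fs) auto
  have U': "\<forall>g\<in>insert f U. (pos(f := x)) g \<in> A - set ys"
    using Cons.prems(1,2,6) by auto
  show ?case
  proof (cases "f \<in> U")
    case True
    then have "\<delta> \<le> tdist T x (pos f)"
      using sep Cons.prems(2,6) by auto
    moreover have
      "length ys + \<delta> * (length ys + card U) \<le> finger_cost T (pos(f := x)) ys fs' + \<delta> * k"
      using Cons.IH[of fs' U "pos(f := x)"] Cons.prems U' True fs
      by (simp add: insert_absorb fun_upd_def)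
    ultimately show ?thesis
      using fs by (simp add: algebra_simps)
  next
    case False
    then have "card (insert f U) = Suc (card U)"
      using Cons.prems(5) finite_subset by fastforce
    moreover have "length ys + \<delta> * (length ys + card (insert f U))
        \<le> finger_cost T (pos(f := x)) ys fs' + \<delta> * k"
      using Cons.IH[of fs' "insert f U" "pos(f := x)"] Cons.prems U' fs by (simp add: fun_upd_def)
    ultimately show ?thesis
      using fs by (simp add: algebra_simps)
  qed
qed

lemma finger_cost_round_ge:
  assumes "length fs = length xs" "set fs \<subseteq> {..<k}"
  shows "length xs + (length xs - k) * min_tdist T xs \<le> finger_cost T pos xs fs"
proof (cases "distinct xs")
  case True
  have "length xs + length xs * min_tdist T xs \<le> finger_cost T pos xs fs + k * min_tdist T xs"
    using finger_cost_round_potential[of "set xs" "min_tdist T xs" T xs fs k "{}"] True assms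
    by (simp add: min_tdist_le mult.commute)
  then show ?thesis
    using length_le_finger_cost[OF assms(1), of T pos] unfolding diff_mult_distrib by linarith
next
  case False
  then show ?thesis
    using length_le_finger_cost[OF assms(1)] by (simp add: min_tdist_def)
qed

lemma finger_cost_concat_ge:
  "length fs = length (concat R) \<Longrightarrow> set fs \<subseteq> {..<k} \<Longrightarrow>
   (\<Sum>xs\<leftarrow>R. length xs + (length xs - k) * min_tdist T xs) \<le> finger_cost T pos (concat R) fs"
proof (induction R arbitrary: fs pos)
  case (Cons xs R)
  let ?fs1 = "take (length xs) fs" and ?fs2 = "drop (length xs) fs"
  have fs: "set ?fs1 \<subseteq> {..<k}" "set ?fs2 \<subseteq> {..<k}"
    "length ?fs1 = length xs" "length ?fs2 = length (concat R)"
    using Cons.prems set_take_subset set_drop_subset by fastforce+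
  obtain pos' where "finger_cost T pos (concat (xs # R)) fs
      = finger_cost T pos xs ?fs1 + finger_cost T pos' (concat R) ?fs2"
    using finger_cost_append[of ?fs1 xs T pos "concat R" ?fs2] fs by auto
  moreover have "length xs + (length xs - k) * min_tdist T xs \<le> finger_cost T pos xs ?fs1"
    using finger_cost_round_ge fs by blast
  moreover have "(\<Sum>xs\<leftarrow>R. length xs + (length xs - k) * min_tdist T xs)
      \<le> finger_cost T pos' (concat R) ?fs2"
    using Cons.IH fs by blast
  ultimately show ?case
    by simp
qed simp

lemma Fk_attained:
  assumes "1 \<le> n" "1 \<le> k"
  obtains T l fs where "bst_on n T" "length fs = length xs" "set fs \<subseteq> {..<k}"
    "Fk n k xs = finger_cost T l xs fs"
proof -
  have "Fk n k xs \<in> {FkT n k T xs | T. bst_on n T}"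
    unfolding Fk_def using bst_on_left_spine by (intro Inf_nat_def1) blast
  then obtain T where T: "bst_on n T" "Fk n k xs = FkT n k T xs"
    by blast
  have "finger_cost T (\<lambda>_. 1) xs (replicate (length xs) 0) \<in> {finger_cost T l xs fs | l fs.
      (\<forall>i < k. l i \<in> {1..n}) \<and> length fs = length xs \<and> set fs \<subseteq> {..<k}}"
    using assms by fastforce
  then have "FkT n k T xs \<in> {finger_cost T l xs fs | l fs.
      (\<forall>i < k. l i \<in> {1..n}) \<and> length fs = length xs \<and> set fs \<subseteq> {..<k}}"
    unfolding FkT_def by (intro Inf_nat_def1) blast
  then show thesis
    using that T by auto
qed

section \<open>Working-set bound of repeated groups\<close>

lemma lg_ge_1: "1 \<le> lg x"
  unfolding lg_def by simp

lemma lg_mono: "x \<le> y \<Longrightarrow> lg x \<le> lg y"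
  unfolding lg_def by simp

lemma lg_eq_log: "2 \<le> x \<Longrightarrow> lg x = log 2 x"
  unfolding lg_def by (simp add: max_def)

lemma lg_double_le: "1 \<le> x \<Longrightarrow> lg (2 * x) \<le> lg x + 1"
  unfolding lg_def by (simp add: max_def log_mult)

lemma rho_le:
  assumes "set xs \<subseteq> {1..n}" "t \<le> length xs"
  shows "rho xs t a \<le> n"
proof -
  have "{xs ! (u - 1) | u. last_acc xs t a < u \<and> u < t} \<subseteq> {1..n}"
    using assms by force
  then have "rho xs t a \<le> card {1..n}"
    unfolding rho_def by (intro card_mono) auto
  then show ?thesis
    by simp
qed

lemma rho_less_of_repeat:
  assumes "0 < d" "d \<le> i" "xs ! (i - d) = xs ! i"
  shows "rho xs (Suc i) (xs ! i) < d"
proof -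
  have "Suc (i - d) \<le> last_acc xs (Suc i) (xs ! i)"
    unfolding last_acc_def using assms
    by (intro Max_ge) (auto intro: finite_subset[of _ "{..i}"])
  then have "{xs ! (u - 1) | u. last_acc xs (Suc i) (xs ! i) < u \<and> u < Suc i}
      \<subseteq> (\<lambda>u. xs ! (u - 1)) ` {Suc (i - d)<..<Suc i}"
    by auto
  then have "rho xs (Suc i) (xs ! i) \<le> card {Suc (i - d)<..<Suc i}"
    unfolding rho_def
    by (meson card_image_le card_mono finite_greaterThanLessThan finite_imageI le_trans)
  then show ?thesis
    using assms by simp
qed

lemma WS_le_of_repeats:
  assumes "set xs \<subseteq> {1..n}" "0 < d"
  shows "WS xs \<le> (\<Sum>i<length xs. if d \<le> i \<and> xs ! (i - d) = xs ! i then lg d else lg n)"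
proof -
  have "WS xs = (\<Sum>i<length xs. lg (rho xs (Suc i) (xs ! i)))"
    unfolding WS_def by (simp add: sum.atLeast1_atMost_eq)
  also have "\<dots> \<le> (\<Sum>i<length xs. if d \<le> i \<and> xs ! (i - d) = xs ! i then lg d else lg n)"
  proof (rule sum_mono)
    fix i assume "i \<in> {..<length xs}"
    then show "lg (rho xs (Suc i) (xs ! i))
        \<le> (if d \<le> i \<and> xs ! (i - d) = xs ! i then lg d else lg n)"
      using rho_le[OF assms(1), of "Suc i"] rho_less_of_repeat[OF assms(2), of i xs]
      by (auto intro: lg_mono)
  qed
  finally show ?thesis .
qed

lemma nth_concat_uniform:
  "\<forall>xs\<in>set R. length xs = s \<Longrightarrow> i < length R * s \<Longrightarrow> concat R ! i = R ! (i div s) ! (i mod s)"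
proof (induction R arbitrary: i)
  case (Cons xs R)
  show ?case
  proof (cases "i < s")
    case False
    moreover have "0 < s"
      using Cons.prems(2) by (cases s) auto
    ultimately have "i div s = Suc ((i - s) div s)" "i mod s = (i - s) mod s"
      by (simp_all add: le_div_geq le_mod_geq)
    then show ?thesis
      using Cons False by (simp add: nth_append)
  qed (use Cons in \<open>simp add: nth_append\<close>)
qed simp

lemma sum_lessThan_mult_blocks:
  fixes f :: "nat \<Rightarrow> 'a::comm_monoid_add"
  shows "(\<Sum>i<P * L. f i) = (\<Sum>b<P. \<Sum>j<L. f (b * L + j))"
proof -
  have "(\<Sum>j\<in>{b * L..<b * L + L}. f j) = (\<Sum>j<L. f (b * L + j))" for b
    using sum.shift_bounds_nat_ivl[where g = f and m = 0 and k = "b * L" and n = L]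
    by (simp add: lessThan_atLeast0 add.commute)
  then show ?thesis
    by (simp flip: sum.nat_group)
qed

definition repeat_groups :: "nat \<Rightarrow> nat list list \<Rightarrow> nat list" where
  "repeat_groups r G = concat (map (\<lambda>g. concat (replicate r g)) G)"

lemma length_repeat_groups:
  "\<forall>g\<in>set G. length g = d \<Longrightarrow> length (repeat_groups r G) = length G * (r * d)"
  unfolding repeat_groups_def by (induction G) (auto simp: length_concat sum_list_replicate)

lemma set_repeat_groups: "set (repeat_groups r G) \<subseteq> \<Union> (set ` set G)"
  unfolding repeat_groups_def by auto

lemma nth_repeat_groups:
  assumes "\<forall>g\<in>set G. length g = d" "b < length G" "j < r * d"
  shows "repeat_groups r G ! (b * (r * d) + j) = G ! b ! (j mod d)"
proof -
  have "b * (r * d) + j < Suc b * (r * d)"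
    using assms(3) by simp
  also have "\<dots> \<le> length G * (r * d)"
    using assms(2) by (intro mult_le_mono1) simp
  finally have idx: "b * (r * d) + j < length G * (r * d)" .
  have "0 < r" "0 < d"
    using assms(3) by (auto intro!: gr0I)
  then have div_mod: "(b * (r * d) + j) div (r * d) = b" "(b * (r * d) + j) mod (r * d) = j"
    using assms(3) by (simp_all add: add.commute[of "b * (r * d)"])
  have "repeat_groups r G ! (b * (r * d) + j) = concat (replicate r (G ! b)) ! j"
    unfolding repeat_groups_def
    using nth_concat_uniform[of "map (\<lambda>g. concat (replicate r g)) G" "r * d"] assms idx
    by (simp add: div_mod length_concat sum_list_replicate)
  also have "\<dots> = G ! b ! (j mod d)"
    using assms by (subst nth_concat_uniform[where s = d]) (auto simp: less_mult_imp_div_less)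
  finally show ?thesis .
qed

lemma WS_repeat_groups_le:
  fixes n d r :: nat
  assumes G: "\<forall>g\<in>set G. length g = d \<and> set g \<subseteq> {1..n}" and "0 < d" "lg n \<le> r"
  shows "WS (repeat_groups r G) \<le> length (repeat_groups r G) * (lg d + 1)"
proof -
  let ?S = "repeat_groups r G" and ?L = "r * d" and ?P = "length G"
  define h where "h i = (if d \<le> i \<and> ?S ! (i - d) = ?S ! i then lg d else lg n)" for i
  have len: "length ?S = ?P * ?L"
    using G by (simp add: length_repeat_groups)
  have "1 \<le> r"
    using lg_ge_1[of n] assms(3) by linarith
  then have "d \<le> ?L"
    by simp
  have "set ?S \<subseteq> {1..n}"
    using set_repeat_groups[of r G] G by blast
  then have "WS ?S \<le> (\<Sum>i<length ?S. h i)"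
    unfolding h_def using \<open>0 < d\<close> by (rule WS_le_of_repeats)
  also have "\<dots> = (\<Sum>b<?P. \<Sum>j<?L. h (b * ?L + j))"
    unfolding len by (rule sum_lessThan_mult_blocks)
  also have "\<dots> \<le> (\<Sum>b<?P. \<Sum>j<?L. lg d + (if j < d then lg n else 0))"
  proof (intro sum_mono)
    fix b j assume b: "b \<in> {..<?P}" and j: "j \<in> {..<?L}"
    have "?S ! (b * ?L + j - d) = ?S ! (b * ?L + j)" if "d \<le> j"
    proof -
      have "b * ?L + j - d = b * ?L + (j - d)" "(j - d) mod d = j mod d"
        using that by (simp_all add: le_mod_geq)
      then show ?thesis
        using nth_repeat_groups[of G d b] G b j by auto
    qed
    then show "h (b * ?L + j) \<le> lg d + (if j < d then lg n else 0)"
      unfolding h_def using lg_ge_1[of d] lg_ge_1[of n] by auto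
  qed
  also have "\<dots> = ?P * (?L * lg d + d * lg n)"
  proof -
    have "{..<?L} \<inter> {j. j < d} = {..<d}"
      using less_le_trans[OF _ \<open>d \<le> ?L\<close>] by auto
    then show ?thesis
      by (simp add: sum.distrib sum.If_cases)
  qed
  also have "\<dots> \<le> ?P * (?L * lg d + ?L)"
    using mult_left_mono[OF assms(3), of d]
    by (intro mult_left_mono add_left_mono) (auto simp: mult.commute)
  also have "\<dots> = length ?S * (lg d + 1)"
    by (simp add: len algebra_simps)
  finally show ?thesis .
qed

section \<open>The hard sequence\<close>

lemma Fk_repeat_groups_ge:
  assumes "1 \<le> n" "1 \<le> k" "\<forall>g\<in>set G. length g = 2 * k"
  obtains T where "bst_on n T"
    "length (repeat_groups r G) + k * r * (\<Sum>g\<leftarrow>G. min_tdist T g) \<le> Fk n k (repeat_groups r G)"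
proof -
  let ?R = "concat (map (replicate r) G)"
  have S: "concat ?R = repeat_groups r G"
    unfolding repeat_groups_def by (induction G) auto
  obtain T l fs where T: "bst_on n T" "length fs = length (repeat_groups r G)" "set fs \<subseteq> {..<k}"
    "Fk n k (repeat_groups r G) = finger_cost T l (repeat_groups r G) fs"
    using Fk_attained[OF assms(1,2)] by metis
  have "(\<Sum>xs\<leftarrow>?R. length xs + (length xs - k) * min_tdist T xs)
      = length (repeat_groups r G) + k * r * (\<Sum>g\<leftarrow>G. min_tdist T g)"
    using assms(3) unfolding repeat_groups_def
    by (induction G) (auto simp: sum_list_replicate length_concat algebra_simps)
  moreover have "(\<Sum>xs\<leftarrow>?R. length xs + (length xs - k) * min_tdist T xs)
      \<le> finger_cost T l (concat ?R) fs"
    using T S by (intro finger_cost_concat_ge) auto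
  ultimately show thesis
    using that T S by simp
qed

lemma spread_lower_bound:
  fixes n k X :: nat and \<epsilon> :: real
  assumes "2 \<le> n" "1 \<le> k" "2 \<le> \<epsilon> * n" "10 * real k ^ 2 \<le> n powr (1 - \<epsilon>)"
    and X: "(1/4::real) ^ X \<le> n ^ n * (10 * real k ^ 2 / n) ^ (n^2)"
  shows "n^2 * \<epsilon> * log 2 n / 4 \<le> X"
proof -
  define L where "L = log 2 n"
  have "0 < L" 
    unfolding L_def using assms(1) by simp
  have q: "0 < 10 * real k ^ 2 / n" 
    using assms(1,2) by simp
  have "log 2 (10 * real k ^ 2 / n) \<le> log 2 (n powr (1 - \<epsilon>) / n)"
    using q assms(1,4) by (subst log_le_cancel_iff) (auto intro: divide_right_mono)
  also have "\<dots> = - \<epsilon> * L"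
    unfolding L_def using assms(1) by (simp add: log_divide log_powr algebra_simps)
  finally have log_q: "log 2 (10 * real k ^ 2 / n) \<le> - \<epsilon> * L" .
  have "n * L \<le> n^2 * \<epsilon> * L / 2"
    using assms(3) \<open>0 < L\<close> mult_right_mono[OF mult_left_mono[OF assms(3), of n], of L]
    by (simp add: power2_eq_square algebra_simps)
  have "log 2 (4::real) = 2"
    using log_pow_cancel[of "2::real" 2] by simp
  then have "- 2 * X = log 2 ((1/4::real) ^ X)"
    by (simp add: log_nat_power log_divide)
  also have "\<dots> \<le> log 2 (n ^ n * (10 * real k ^ 2 / n) ^ (n^2))"
    using X q assms(1) by simp
  also have "\<dots> = n * L + n^2 * log 2 (10 * real k ^ 2 / n)"
    unfolding L_def using q assms(1,2) by (simp add: log_mult log_nat_power)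
  also have "\<dots> \<le> n * L + n^2 * (- \<epsilon> * L)"
    using log_q by (intro add_left_mono mult_left_mono) auto
  also have "\<dots> \<le> - (n^2 * \<epsilon> * L / 2)"
    using \<open>n * L \<le> n^2 * \<epsilon> * L / 2\<close> by (simp add: algebra_simps)
  finally show ?thesis
    unfolding L_def by simp
qed

lemma Fk_repeat_spread_groups_ge:
  fixes n k r :: nat and \<epsilon> :: real
  assumes "2 \<le> n" "1 \<le> k" "2 \<le> \<epsilon> * n" "10 * real k ^ 2 \<le> n powr (1 - \<epsilon>)" "log 2 n \<le> r"
    and G: "\<forall>g\<in>set G. length g = 2 * k" "length G = n^2"
    and spread: "\<forall>T. bst_on n T \<longrightarrow>
      (1/4::real) ^ (\<Sum>g\<leftarrow>G. min_tdist T g) \<le> n ^ n * (10 * real k ^ 2 / n) ^ (n^2)"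
  shows "\<epsilon>/8 * length (repeat_groups r G) * log 2 n \<le> Fk n k (repeat_groups r G)"
proof -
  obtain T where T: "bst_on n T"
    and Fk: "length (repeat_groups r G) + k * r * (\<Sum>g\<leftarrow>G. min_tdist T g)
      \<le> Fk n k (repeat_groups r G)"
    using Fk_repeat_groups_ge[of n k G r] G assms(1,2) by auto
  have "\<epsilon>/8 * length (repeat_groups r G) * log 2 n = real k * real r * (n^2 * \<epsilon> * log 2 n / 4)"
    using length_repeat_groups[of G "2 * k" r] G by simp
  also have "\<dots> \<le> real k * real r * (\<Sum>g\<leftarrow>G. min_tdist T g)"
    using spread T assms by (intro mult_left_mono spread_lower_bound) auto
  also have "\<dots> \<le> Fk n k (repeat_groups r G)"
    using Fk by (simp flip: of_nat_mult)
  finally show ?thesis .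
qed

lemma ex_hard_sequence:
  fixes n k :: nat and \<epsilon> :: real
  assumes n: "2 \<le> n" and k: "1 \<le> k" and "2 \<le> \<epsilon> * n" "10 * real k ^ 2 \<le> n powr (1 - \<epsilon>)"
  shows "\<exists>m S. m \<ge> 1 \<and> length S = m \<and> set S \<subseteq> {1..n} \<and>
           WS S \<le> 3 * real m * lg (real k) \<and> real (Fk n k S) \<ge> \<epsilon>/8 * real m * lg (real n / real k)"
proof -
  define r where "r = nat \<lceil>log 2 n\<rceil>"
  have lg_n: "lg n = log 2 n" "1 \<le> log 2 n"
    using n by (simp_all add: lg_eq_log)
  then have r: "log 2 n \<le> r" "1 \<le> r"
    unfolding r_def by linarith+
  obtain G where "G \<in> lists_of (lists_of {1..n} (2 * k)) (n^2)"
    and spread: "\<forall>T. bst_on n T \<longrightarrow>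
      (1/4::real) ^ (\<Sum>g\<leftarrow>G. min_tdist T g) \<le> n ^ n * (10 * real k ^ 2 / n) ^ (n^2)"
    using ex_groups_spread_in_every_bst[of n "2 * k" "n^2"] n k by (auto simp: power2_eq_square)
  then have G: "\<forall>g\<in>set G. length g = 2 * k \<and> set g \<subseteq> {1..n}" "length G = n^2"
    by (auto simp: lists_of_def)
  define S where "S = repeat_groups r G"
  have len: "length S = n^2 * (r * (2 * k))"
    unfolding S_def using length_repeat_groups[of G "2 * k" r] G by simp
  have "WS S \<le> length S * (lg (2 * k) + 1)"
    unfolding S_def using WS_repeat_groups_le[OF G(1)] r lg_n k by simp
  also have "\<dots> \<le> length S * (3 * lg k)"
    using lg_double_le[of k] lg_ge_1[of k] k by (intro mult_left_mono) auto
  finally have WS: "WS S \<le> 3 * length S * lg k"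
    by simp
  have "0 \<le> \<epsilon>"
    using assms(3) by (smt (verit) of_nat_0_le_iff mult_nonpos_nonneg)
  then have "\<epsilon>/8 * length S * lg (n / k) \<le> \<epsilon>/8 * length S * log 2 n"
    using lg_n lg_mono[of "n / k" n] k
    by (intro mult_left_mono) (auto simp: divide_le_eq mult_le_cancel_left1)
  also have "\<dots> \<le> Fk n k S"
    unfolding S_def using Fk_repeat_spread_groups_ge[of n k \<epsilon> r G] G spread r assms by auto
  finally have "\<epsilon>/8 * length S * lg (n / k) \<le> Fk n k S" .
  moreover have "set S \<subseteq> {1..n}"
    using set_repeat_groups[of r G] G(1) unfolding S_def by blast
  ultimately show ?thesis
    using WS len n k r by (intro exI[of _ "length S"] exI[of _ S]) (simp add: Suc_le_eq)
qed

lemma ten_sq_le_powr_of_le: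
  fixes k n :: nat and \<epsilon> C0 :: real
  assumes "1 \<le> n" "real k \<le> C0 * n powr (1/2 - \<epsilon>)" "10 * C0^2 \<le> n powr \<epsilon>"
  shows "10 * real k ^ 2 \<le> n powr (1 - \<epsilon>)"
proof -
  have "real k ^ 2 \<le> (C0 * n powr (1/2 - \<epsilon>)) ^ 2"
    using assms(2) by (intro power_mono) auto
  also have "\<dots> = C0^2 * n powr (1 - 2 * \<epsilon>)"
    using assms(1) by (simp add: power_mult_distrib powr_power algebra_simps)
  finally have "10 * real k ^ 2 \<le> 10 * C0^2 * n powr (1 - 2 * \<epsilon>)"
    by simp
  also have "\<dots> \<le> n powr \<epsilon> * n powr (1 - 2 * \<epsilon>)"
    using assms(3) by (intro mult_right_mono) auto
  also have "\<dots> = n powr (1 - \<epsilon>)"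
    using assms(1) by (simp add: powr_add[symmetric])
  finally show ?thesis .
qed

theorem theorem32:
  fixes \<epsilon> C0 :: real
  assumes "\<epsilon> > 0" and "C0 > 0"
  shows "\<exists>c1 c2 :: real. c1 > 0 \<and> c2 > 0 \<and>
    (\<exists>N :: nat. \<forall>n \<ge> N. \<forall>k :: nat.
       1 \<le> k \<and> real k \<le> C0 * real n powr (1/2 - \<epsilon>) \<longrightarrow>
       (\<exists>m :: nat. \<exists>S :: nat list. m \<ge> 1 \<and> length S = m \<and> set S \<subseteq> {1..n} \<and>
          WS S \<le> c1 * real m * lg (real k) \<and>
          real (Fk n k S) \<ge> c2 * real m * lg (real n / real k)))"
proof -
  have "eventually (\<lambda>n::nat. 2 \<le> real n \<and> 2 \<le> \<epsilon> * n \<and> 10 * C0^2 \<le> n powr \<epsilon>) at_top"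
    using assms(1) by (intro eventually_conj) real_asymp+
  then obtain N where N: "\<And>n. N \<le> n \<Longrightarrow> 2 \<le> real n \<and> 2 \<le> \<epsilon> * n \<and> 10 * C0^2 \<le> n powr \<epsilon>"
    by (auto simp: eventually_at_top_linorder)
  have ten_sq: "10 * real k ^ 2 \<le> n powr (1 - \<epsilon>)"
    if "N \<le> n" "real k \<le> C0 * real n powr (1/2 - \<epsilon>)" for n k :: nat
    using N[OF that(1)] that(2) by (intro ten_sq_le_powr_of_le) auto
  show ?thesis
    by (rule exI[of _ 3], rule exI[of _ "\<epsilon>/8"], intro conjI ex_hard_sequence exI[of _ N] allI impI)
      (use assms(1) N ten_sq in auto)
qed

end
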